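(* Let $Z$ be a separable real Banach space and $f:Z\to\mathbb{R}$ a continuous convex function. Then there exists a unique closed linear subspace $Y_f$ of $Z$ such that, for the quotient space $X_f:=Z/Y_f$ and the natural projection $\pi:Z\to X_f$, the function $f$ can be written as $$f(z)=c(\pi(z))+\ell(z)\quad\text{for all } z\in Z,$$ where $\ell\in Z^*$ and $c:X_f\to\mathbb{R}$ is a convex function which is essentially directionally coercive. Moreover, $$Y_f=\{v\in Z: f(z_0+tv)-f(z_0)-\langle \xi_0,tv\rangle=0 \text{ for all } t\in\mathbb{R}\},$$ where $z_0$ is any point of $Z$ and $\xi_0$ is any element of $\partial f(z_0)$.
   Context: For a continuous convex $f$ on a Banach space $Z$, $\partial f(x)=\{\xi\in Z^*: f(y)\ge f(x)+\langle\xi,y-x\rangle \text{ for all } y\in Z\}$. A function $g$ on a Banach space $X$ is directionally coercive if $\lim_{t\to\infty}g(x+tv)=\infty$ for all $x\in X$, $v\in X\setminus\{0\}$; it is essentially directionally coercive if there is $\ell\in X^*$ with $g-\ell$ directionally coercive. $Z/Y_f$ carries the quotient norm. *)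

theory Defs
  imports "HOL-Analysis.Analysis"
begin

definition subdiff :: "('a::real_normed_vector \<Rightarrow> real) \<Rightarrow> 'a \<Rightarrow> ('a \<Rightarrow> real) set" where
  "subdiff f x = {\<xi>. bounded_linear \<xi> \<and> (\<forall>y. f y \<ge> f x + \<xi> (y - x))}"

text \<open>Quotient space Z/Y realised as the set of cosets z + Y; natural projection.\<close>
definition quot_proj :: "'a::real_vector set \<Rightarrow> 'a \<Rightarrow> 'a set" where
  "quot_proj Y z = (\<lambda>y. z + y) ` Y"

text \<open>Quotient norm of the coset z + Y: inf over y in Y of norm (z + y), i.e. dist of z to Y.\<close>
definition quot_norm :: "'a::real_normed_vector set \<Rightarrow> 'a \<Rightarrow> real" where
  "quot_norm Y z = infdist z Y"

definition quot_convex :: "'a::real_vector set \<Rightarrow> ('a set \<Rightarrow> real) \<Rightarrow> bool" where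
  "quot_convex Y c \<longleftrightarrow> (\<forall>z w. \<forall>u\<in>{0..1::real}.
      c (quot_proj Y (u *\<^sub>R z + (1 - u) *\<^sub>R w))
        \<le> u * c (quot_proj Y z) + (1 - u) * c (quot_proj Y w))"

definition quot_dual :: "'a::real_normed_vector set \<Rightarrow> ('a set \<Rightarrow> real) \<Rightarrow> bool" where
  "quot_dual Y L \<longleftrightarrow> linear (\<lambda>z. L (quot_proj Y z))
      \<and> (\<exists>K. \<forall>z. \<bar>L (quot_proj Y z)\<bar> \<le> K * quot_norm Y z)"

definition quot_dir_coercive :: "'a::real_vector set \<Rightarrow> ('a set \<Rightarrow> real) \<Rightarrow> bool" where
  "quot_dir_coercive Y g \<longleftrightarrow> (\<forall>z w. quot_proj Y w \<noteq> quot_proj Y 0 \<longrightarrow>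
      filterlim (\<lambda>t::real. g (quot_proj Y (z + t *\<^sub>R w))) at_top at_top)"

definition quot_ess_dir_coercive :: "'a::real_normed_vector set \<Rightarrow> ('a set \<Rightarrow> real) \<Rightarrow> bool" where
  "quot_ess_dir_coercive Y c \<longleftrightarrow> (\<exists>L. quot_dual Y L \<and> quot_dir_coercive Y (\<lambda>x. c x - L x))"

definition decomposes :: "('a::real_normed_vector \<Rightarrow> real) \<Rightarrow> 'a set \<Rightarrow> bool" where
  "decomposes f Y \<longleftrightarrow> closed Y \<and> subspace Y \<and>
     (\<exists>l c. bounded_linear l \<and> quot_convex Y c \<and> quot_ess_dir_coercive Y c \<and>
        (\<forall>z. f z = c (quot_proj Y z) + l z))"

end

theory Submission
  imports Defs
begin

(*
  Y_f is the set of directions along which f is affine. For a subgradient \<xi> of f, the function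
  f - \<xi> is invariant under Y_f and so descends to the quotient. For essential coercivity,
  average subgradients \<eta> n taken at a dense sequence of points, with positive summable weights,
  into a single L0 in Z^*. If f - L0 does not tend to infinity along a line z + t w, convexity makes
  it nonincreasing there, so f (z + t w) \<le> f z + t L0 w for t \<ge> 0, which forces \<eta> n w \<le> L0 w for
  every n. As L0 w is a strict average of the \<eta> n w, they all equal L0 w; density and continuity
  then make f affine in direction w, i.e. w \<in> Y_f.
  Uniqueness: for any decomposition f is affine along the subspace, whereas along any other
  direction c - L would be affine and still tend to infinity in both directions.
  Subgradients exist by the Hahn-Banach theorem, in its Zorn's lemma form.
*)

section \<open>Hahn-Banach for convex dominating functions\<close>

(* Partial linear functionals below q, represented by their graphs so that Zorn's lemma applies
   to set inclusion. *)
definition dominated_linear_graph :: "('a::real_vector \<Rightarrow> real) \<Rightarrow> ('a \<times> real) set \<Rightarrow> bool" where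
  "dominated_linear_graph q G \<longleftrightarrow>
     (\<forall>x a b. (x, a) \<in> G \<longrightarrow> (x, b) \<in> G \<longrightarrow> a = b) \<and> (0, 0) \<in> G \<and>
     (\<forall>x a y b. (x, a) \<in> G \<longrightarrow> (y, b) \<in> G \<longrightarrow> (x + y, a + b) \<in> G) \<and>
     (\<forall>x a r. (x, a) \<in> G \<longrightarrow> (r *\<^sub>R x, r * a) \<in> G) \<and>
     (\<forall>x a. (x, a) \<in> G \<longrightarrow> a \<le> q x)"

lemma dominated_linear_graphD:
  assumes "dominated_linear_graph q G"
  shows graph_unique: "\<And>x a b. (x, a) \<in> G \<Longrightarrow> (x, b) \<in> G \<Longrightarrow> a = b"
    and graph_zero: "(0, 0) \<in> G"
    and graph_add: "\<And>x a y b. (x, a) \<in> G \<Longrightarrow> (y, b) \<in> G \<Longrightarrow> (x + y, a + b) \<in> G"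
    and graph_scale: "\<And>x a r. (x, a) \<in> G \<Longrightarrow> (r *\<^sub>R x, r * a) \<in> G"
    and graph_le: "\<And>x a. (x, a) \<in> G \<Longrightarrow> a \<le> q x"
  using assms unfolding dominated_linear_graph_def by metis+

lemma dominated_graph_slope_le:
  assumes q: "convex_on UNIV q" and G: "dominated_linear_graph q G"
    and m1: "(m1, a1) \<in> G" and m2: "(m2, a2) \<in> G" and s: "0 < s" and t: "0 < t"
  shows "(a1 - q (m1 - s *\<^sub>R e)) / s \<le> (q (m2 + t *\<^sub>R e) - a2) / t"
    (is "?X / s \<le> ?Y / t")
proof -
  define u where "u = s / (s + t)"
  have u: "0 \<le> u" "u \<le> 1" "(1 - u) * s = u * t"
    using s t by (auto simp: u_def field_simps)
  have "((1 - u) *\<^sub>R m1 + u *\<^sub>R m2, (1 - u) * a1 + u * a2) \<in> G"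
    using G m1 m2 by (intro graph_add graph_scale)
  then have "(1 - u) * a1 + u * a2 \<le> q ((1 - u) *\<^sub>R m1 + u *\<^sub>R m2)"
    by (rule graph_le[OF G])
  also have "(1 - u) *\<^sub>R m1 + u *\<^sub>R m2 = (1 - u) *\<^sub>R (m1 - s *\<^sub>R e) + u *\<^sub>R (m2 + t *\<^sub>R e)"
  proof -
    have "(1 - u) *\<^sub>R (m1 - s *\<^sub>R e) + u *\<^sub>R (m2 + t *\<^sub>R e)
        = (1 - u) *\<^sub>R m1 + u *\<^sub>R m2 + (u * t - (1 - u) * s) *\<^sub>R e"
      by (simp add: algebra_simps)
    then show ?thesis using u(3) by simp
  qed
  also have "q \<dots> \<le> (1 - u) * q (m1 - s *\<^sub>R e) + u * q (m2 + t *\<^sub>R e)"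
    using convex_onD[OF q u(1,2)] by simp
  finally have "(1 - u) * ?X \<le> u * ?Y"
    by (simp add: algebra_simps)
  moreover have "1 - u = t / (s + t)"
    using s t by (simp add: u_def field_simps)
  ultimately have "t * ?X / (s + t) \<le> s * ?Y / (s + t)"
    by (simp add: u_def)
  then have "t * ?X \<le> s * ?Y"
    using s t by (simp add: divide_le_cancel)
  then show ?thesis
    using s t by (simp add: field_simps)
qed

(* The value at e is the supremum of the left difference quotients, which by
   dominated_graph_slope_le lies below every right difference quotient. *)
lemma dominated_graph_exists_slope:
  assumes q: "convex_on UNIV q" and G: "dominated_linear_graph q G"
  shows "\<exists>\<alpha>. \<forall>m a t. (m, a) \<in> G \<longrightarrow> a + t * \<alpha> \<le> q (m + t *\<^sub>R e)"
proof -
  define S where "S = {(a - q (m - s *\<^sub>R e)) / s | m a s. (m, a) \<in> G \<and> 0 < s}"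
  have S_mem: "(a - q (m - s *\<^sub>R e)) / s \<in> S" if "(m, a) \<in> G" "0 < s" for m a s
    using that unfolding S_def by blast
  have S_ub: "y \<le> (q (m + t *\<^sub>R e) - a) / t" if "(m, a) \<in> G" "0 < t" "y \<in> S" for m a t y
    using that dominated_graph_slope_le[OF q G] unfolding S_def by blast
  have S_ne: "S \<noteq> {}"
    using S_mem[OF graph_zero[OF G] zero_less_one] by blast
  have S_bdd: "bdd_above S"
    using S_ub[OF graph_zero[OF G] zero_less_one] by (rule bdd_aboveI)
  have "a + t * Sup S \<le> q (m + t *\<^sub>R e)" if ma: "(m, a) \<in> G" for m a t
  proof (cases t "0::real" rule: linorder_cases)
    case less
    then have "(a - q (m - (-t) *\<^sub>R e)) / (-t) \<le> Sup S"
      using S_mem[OF ma, of "-t"] by (intro cSup_upper[OF _ S_bdd]) simp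
    then show ?thesis
      using less by (simp add: field_simps)
  next
    case equal
    then show ?thesis using graph_le[OF G ma] by simp
  next
    case greater
    then have "Sup S \<le> (q (m + t *\<^sub>R e) - a) / t"
      using S_ub[OF ma greater] by (intro cSup_least[OF S_ne])
    then show ?thesis
      using greater by (simp add: field_simps)
  qed
  then show ?thesis by blast
qed

lemma dominated_linear_graph_line_extension:
  assumes G: "dominated_linear_graph q G" and e: "e \<notin> fst ` G"
    and \<alpha>: "\<And>m a t. (m, a) \<in> G \<Longrightarrow> a + t * \<alpha> \<le> q (m + t *\<^sub>R e)"
  shows "dominated_linear_graph q {(m + t *\<^sub>R e, a + t * \<alpha>) | m a t. (m, a) \<in> G}"
    (is "dominated_linear_graph q ?G'")
proof -
  have mem: "(m + t *\<^sub>R e, a + t * \<alpha>) \<in> ?G'" if "(m, a) \<in> G" for m a t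
    using that by blast
  have same_line: "t1 = t2" if "(m1, a1) \<in> G" "(m2, a2) \<in> G" "m1 + t1 *\<^sub>R e = m2 + t2 *\<^sub>R e"
    for m1 a1 t1 m2 a2 t2
  proof (rule ccontr)
    assume "t1 \<noteq> t2"
    have "((1 / (t1 - t2)) *\<^sub>R (m2 + (-1) *\<^sub>R m1), (1 / (t1 - t2)) * (a2 + (-1) * a1)) \<in> G"
      using that(1,2) by (intro graph_scale[OF G] graph_add[OF G]) auto
    moreover have "(1 / (t1 - t2)) *\<^sub>R (m2 + (-1) *\<^sub>R m1) = e"
    proof -
      have "m2 - m1 = (t1 - t2) *\<^sub>R e"
        using that(3) by (simp add: algebra_simps)
      then show ?thesis using \<open>t1 \<noteq> t2\<close> by simp
    qed
    ultimately show False
      using e by force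
  qed
  show ?thesis
    unfolding dominated_linear_graph_def
  proof (intro conjI allI impI)
    fix x a b
    assume "(x, a) \<in> ?G'" "(x, b) \<in> ?G'"
    then obtain m1 a1 t1 m2 a2 t2 where
      "(m1, a1) \<in> G" "(m2, a2) \<in> G" "x = m1 + t1 *\<^sub>R e" "x = m2 + t2 *\<^sub>R e"
      "a = a1 + t1 * \<alpha>" "b = a2 + t2 * \<alpha>"
      by blast
    then show "a = b"
      using same_line graph_unique[OF G] by (metis add_right_cancel)
  next
    show "(0, 0) \<in> ?G'"
      using graph_zero[OF G] by force
  next
    fix x a y b
    assume "(x, a) \<in> ?G'" "(y, b) \<in> ?G'"
    then obtain m1 a1 t1 m2 a2 t2 where
      "(m1, a1) \<in> G" "(m2, a2) \<in> G" "x = m1 + t1 *\<^sub>R e" "y = m2 + t2 *\<^sub>R e"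
      "a = a1 + t1 * \<alpha>" "b = a2 + t2 * \<alpha>"
      by blast
    moreover from this have "(m1 + m2, a1 + a2) \<in> G"
      by (intro graph_add[OF G])
    ultimately show "(x + y, a + b) \<in> ?G'"
      using mem[of "m1 + m2" "a1 + a2" "t1 + t2"] by (simp add: algebra_simps)
  next
    fix x a r
    assume "(x, a) \<in> ?G'"
    then obtain m a' t where "(m, a') \<in> G" "x = m + t *\<^sub>R e" "a = a' + t * \<alpha>"
      by blast
    moreover from this have "(r *\<^sub>R m, r * a') \<in> G"
      by (intro graph_scale[OF G])
    ultimately show "(r *\<^sub>R x, r * a) \<in> ?G'"
      using mem[of "r *\<^sub>R m" "r * a'" "r * t"] by (simp add: algebra_simps)
  next
    fix x a
    assume "(x, a) \<in> ?G'"
    then show "a \<le> q x"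
      using \<alpha> by blast
  qed
qed

lemma dominated_linear_graph_chain_Union:
  assumes C: "C \<in> chains {G. dominated_linear_graph q G}" and q0: "0 \<le> q 0"
  shows "dominated_linear_graph q (insert (0, 0) (\<Union>C))"
proof (cases "C = {}")
  case True
  then show ?thesis
    using q0 by (simp add: dominated_linear_graph_def)
next
  case False
  have CG: "\<And>G. G \<in> C \<Longrightarrow> dominated_linear_graph q G"
    using C unfolding chains_def by blast
  have common: "\<exists>G\<in>C. p1 \<in> G \<and> p2 \<in> G" if "p1 \<in> \<Union>C" "p2 \<in> \<Union>C" for p1 p2
    using that C unfolding chains_def chain_subset_def by blast
  have "(0, 0) \<in> \<Union>C"
    using False graph_zero[OF CG] by blast
  then have "insert (0, 0) (\<Union>C) = \<Union>C"
    by blast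
  moreover have "dominated_linear_graph q (\<Union>C)"
    unfolding dominated_linear_graph_def
  proof (intro conjI allI impI)
    show "(0, 0) \<in> \<Union>C" by fact
  next
    fix x a b
    assume "(x, a) \<in> \<Union>C" "(x, b) \<in> \<Union>C"
    then show "a = b"
      using common graph_unique[OF CG] by metis
  next
    fix x a y b
    assume "(x, a) \<in> \<Union>C" "(y, b) \<in> \<Union>C"
    then show "(x + y, a + b) \<in> \<Union>C"
      using common graph_add[OF CG] by blast
  next
    fix x a r
    assume "(x, a) \<in> \<Union>C"
    then show "(r *\<^sub>R x, r * a) \<in> \<Union>C"
      using graph_scale[OF CG] by blast
  next
    fix x a
    assume "(x, a) \<in> \<Union>C"
    then show "a \<le> q x"
      using graph_le[OF CG] by blast
  qed
  ultimately show ?thesis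
    by simp
qed

theorem convex_dominated_linear_exists:
  fixes q :: "'a::real_vector \<Rightarrow> real"
  assumes q: "convex_on UNIV q" and q0: "0 \<le> q 0"
  shows "\<exists>\<xi>. linear \<xi> \<and> (\<forall>x. \<xi> x \<le> q x)"
proof -
  have "\<forall>C\<in>chains {G. dominated_linear_graph q G}.
      \<exists>U\<in>{G. dominated_linear_graph q G}. \<forall>X\<in>C. X \<subseteq> U"
  proof
    fix C
    assume "C \<in> chains {G. dominated_linear_graph q G}"
    then have "dominated_linear_graph q (insert (0, 0) (\<Union>C))"
      by (rule dominated_linear_graph_chain_Union[where q = q, OF _ q0])
    then show "\<exists>U\<in>{G. dominated_linear_graph q G}. \<forall>X\<in>C. X \<subseteq> U"
      by (intro bexI[of _ "insert (0, 0) (\<Union>C)"]) auto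
  qed
  from Zorn_Lemma2[OF this] obtain G where G: "dominated_linear_graph q G"
    and maximal: "\<And>G'. dominated_linear_graph q G' \<Longrightarrow> G \<subseteq> G' \<Longrightarrow> G' = G"
    by blast
  have total: "\<exists>a. (x, a) \<in> G" for x
  proof (rule ccontr)
    assume "\<nexists>a. (x, a) \<in> G"
    then have x: "x \<notin> fst ` G"
      by force
    obtain \<alpha> where \<alpha>: "\<And>m a t. (m, a) \<in> G \<Longrightarrow> a + t * \<alpha> \<le> q (m + t *\<^sub>R x)"
      using dominated_graph_exists_slope[OF q G] by blast
    define G' where "G' = {(m + t *\<^sub>R x, a + t * \<alpha>) | m a t. (m, a) \<in> G}"
    have mem: "(m + t *\<^sub>R x, a + t * \<alpha>) \<in> G'" if "(m, a) \<in> G" for m a t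
      using that unfolding G'_def by blast
    have "G \<subseteq> G'"
      using mem[where t = 0] by auto
    then have "G' = G"
      using maximal dominated_linear_graph_line_extension[OF G x \<alpha>, folded G'_def] by blast
    then show False
      using mem[OF graph_zero[OF G], of 1] x by (simp add: rev_image_eqI)
  qed
  define \<xi> where "\<xi> x = (THE a. (x, a) \<in> G)" for x
  have \<xi>_eq: "\<xi> x = a" if "(x, a) \<in> G" for x a
    unfolding \<xi>_def using that graph_unique[OF G] by (intro the_equality) blast+
  have \<xi>_in: "(x, \<xi> x) \<in> G" for x
    using total[of x] \<xi>_eq by blast
  have "linear \<xi>"
    by (rule linearI) (auto intro!: \<xi>_eq graph_add[OF G] graph_scale[OF G] \<xi>_in)
  moreover have "\<xi> x \<le> q x" for x
    using graph_le[OF G \<xi>_in] .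
  ultimately show ?thesis
    by blast
qed

section \<open>Subgradients of continuous convex functions\<close>

lemma convex_on_compose_affine:
  assumes f: "convex_on UNIV f" and h: "linear h"
  shows "convex_on UNIV (\<lambda>x. f (z + h x))"
  unfolding convex_on_def
proof (intro conjI ballI allI impI convex_UNIV)
  fix x y and u v :: real
  assume "0 \<le> u" "0 \<le> v" "u + v = 1"
  moreover have "z = u *\<^sub>R z + v *\<^sub>R z"
    using \<open>u + v = 1\<close> by (metis scaleR_add_left scaleR_one)
  then have "z + h (u *\<^sub>R x + v *\<^sub>R y) = u *\<^sub>R (z + h x) + v *\<^sub>R (z + h y)"
    by (simp add: linear_add[OF h] linear_scale[OF h] algebra_simps)
  ultimately show "f (z + h (u *\<^sub>R x + v *\<^sub>R y)) \<le> u * f (z + h x) + v * f (z + h y)"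
    using f by (simp add: convex_on_def)
qed

lemma linear_bounded_above_on_ball_imp_bounded_linear:
  fixes \<xi> :: "'a::real_normed_vector \<Rightarrow> real"
  assumes \<xi>: "linear \<xi>" and d: "0 < d" and le: "\<And>v. norm v < d \<Longrightarrow> \<xi> v \<le> C"
  shows "bounded_linear \<xi>"
proof -
  have bound: "\<xi> v \<le> norm v * (2 * \<bar>C\<bar> / d)" for v
  proof (cases "v = 0")
    case True
    then show ?thesis using linear_0[OF \<xi>] by simp
  next
    case False
    define r where "r = d / (2 * norm v)"
    have r: "0 < r" "r * norm v < d"
      using False d by (simp_all add: r_def)
    then have "r * \<xi> v \<le> C"
      using le[of "r *\<^sub>R v"] linear_scale[OF \<xi>] by simp
    then have "\<xi> v \<le> C / r"
      using r by (simp add: field_simps)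
    also have "\<dots> \<le> norm v * (2 * \<bar>C\<bar> / d)"
      using False d by (simp add: r_def field_simps)
    finally show ?thesis .
  qed
  show ?thesis
  proof (rule bounded_linear_intro)
    show "\<xi> (x + y) = \<xi> x + \<xi> y" for x y
      by (rule linear_add[OF \<xi>])
    show "\<xi> (r *\<^sub>R x) = r *\<^sub>R \<xi> x" for r x
      by (rule linear_scale[OF \<xi>])
    show "norm (\<xi> x) \<le> norm x * (2 * \<bar>C\<bar> / d)" for x
      using bound[of x] bound[of "-x"] linear_neg[OF \<xi>, of x] by (simp add: abs_le_iff)
  qed
qed

lemma subdiff_nonempty:
  fixes f :: "'a::real_normed_vector \<Rightarrow> real"
  assumes cont: "continuous_on UNIV f" and conv: "convex_on UNIV f"
  shows "subdiff f x \<noteq> {}"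
proof -
  define q where "q v = f (x + v) - f x" for v
  have "convex_on UNIV q"
    unfolding q_def using convex_on_compose_affine[OF conv linear_id, of x]
    by (intro convex_on_diff) (simp_all add: concave_on_const)
  then obtain \<xi> where \<xi>: "linear \<xi>" and le: "\<And>v. \<xi> v \<le> q v"
    using convex_dominated_linear_exists[of q] by (auto simp: q_def)
  obtain d where d: "0 < d" "\<And>y. dist y x < d \<Longrightarrow> dist (f y) (f x) < 1"
    using cont unfolding continuous_on_iff by (metis UNIV_I zero_less_one)
  have "\<xi> v \<le> 1" if "norm v < d" for v
    using le[of v] d(2)[of "x + v"] that by (simp add: q_def dist_norm)
  then have "bounded_linear \<xi>"
    by (rule linear_bounded_above_on_ball_imp_bounded_linear[OF \<xi> d(1)])
  moreover have "f x + \<xi> (y - x) \<le> f y" for y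
    using le[of "y - x"] by (simp add: q_def)
  ultimately show ?thesis
    unfolding subdiff_def by auto
qed

lemma subdiffD:
  assumes "\<xi> \<in> subdiff f x"
  shows subdiff_linear: "linear \<xi>" and subdiff_le: "f x + \<xi> (y - x) \<le> f y"
  using assms unfolding subdiff_def by (auto dest: bounded_linear.linear)

lemma subdiff_affine_line_slope:
  assumes \<xi>: "\<xi> \<in> subdiff f x" and line: "\<And>t. f (x + t *\<^sub>R w) = f x + t * s"
  shows "\<xi> w = s"
proof -
  have "t * \<xi> w \<le> t * s" for t
    using subdiff_le[OF \<xi>, of "x + t *\<^sub>R w"] line[of t] linear_scale[OF subdiff_linear[OF \<xi>]]
    by simp
  from this[of 1] this[of "-1"] show ?thesis
    by simp
qed

lemma subdiff_le_upper_slope: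
  assumes \<eta>: "\<eta> \<in> subdiff f p" and upper: "\<And>t. 0 \<le> t \<Longrightarrow> f (z + t *\<^sub>R w) \<le> f z + t * s"
  shows "\<eta> w \<le> s"
proof (rule ccontr)
  assume "\<not> \<eta> w \<le> s"
  then have gap: "0 < \<eta> w - s"
    by simp
  define C where "C = f z - f p - \<eta> (z - p)"
  have "t * (\<eta> w - s) \<le> C" if "0 \<le> t" for t
  proof -
    have "\<eta> (z + t *\<^sub>R w - p) = \<eta> ((z - p) + t *\<^sub>R w)"
      by (simp add: algebra_simps)
    also have "\<dots> = \<eta> (z - p) + t * \<eta> w"
      using linear_add[OF subdiff_linear[OF \<eta>]] linear_scale[OF subdiff_linear[OF \<eta>]] by simp
    finally have "\<eta> (z + t *\<^sub>R w - p) = \<eta> (z - p) + t * \<eta> w" .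
    then show ?thesis
      using subdiff_le[OF \<eta>, of "z + t *\<^sub>R w"] upper[OF that] by (simp add: C_def algebra_simps)
  qed
  from this[of "(\<bar>C\<bar> + 1) / (\<eta> w - s)"] show False
    using gap by simp
qed

lemma affine_line_of_dense_subgradients:
  fixes f :: "'a::real_normed_vector \<Rightarrow> real"
  assumes cont: "continuous_on UNIV f" and dense: "closure D = UNIV"
    and subgrad: "\<And>p. p \<in> D \<Longrightarrow> \<exists>\<eta>\<in>subdiff f p. \<eta> w = s"
  shows "f (x + t *\<^sub>R w) = f x + t * s"
proof -
  have ge: "f x + t * s \<le> f (x + t *\<^sub>R w)" for x t
  proof -
    have "closed {x. f x + t * s \<le> f (x + t *\<^sub>R w)}"
      by (intro closed_Collect_le continuous_intros continuous_on_compose2[OF cont]) auto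
    moreover have "D \<subseteq> {x. f x + t * s \<le> f (x + t *\<^sub>R w)}"
    proof
      fix p
      assume "p \<in> D"
      then obtain \<eta> where \<eta>: "\<eta> \<in> subdiff f p" "\<eta> w = s"
        using subgrad by blast
      then show "p \<in> {x. f x + t * s \<le> f (x + t *\<^sub>R w)}"
        using subdiff_le[OF \<eta>(1), of "p + t *\<^sub>R w"] linear_scale[OF subdiff_linear[OF \<eta>(1)]]
        by simp
    qed
    ultimately have "closure D \<subseteq> {x. f x + t * s \<le> f (x + t *\<^sub>R w)}"
      by (rule closure_minimal[rotated])
    then show ?thesis
      using dense by auto
  qed
  from ge[of x t] ge[of "x + t *\<^sub>R w" "-t"] show ?thesis
    by simp
qed

section \<open>Quotients and the uniqueness of the decomposition\<close>

lemma quot_proj_eq_iff: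
  assumes Y: "subspace Y"
  shows "quot_proj Y z = quot_proj Y w \<longleftrightarrow> z - w \<in> Y"
proof
  assume "quot_proj Y z = quot_proj Y w"
  moreover have "z \<in> quot_proj Y z"
    unfolding quot_proj_def using subspace_0[OF Y] by force
  ultimately obtain y where "y \<in> Y" "z = w + y"
    unfolding quot_proj_def by blast
  then show "z - w \<in> Y"
    by simp
next
  assume zw: "z - w \<in> Y"
  have "w + ((z - w) + y) \<in> quot_proj Y w" "z + (y - (z - w)) \<in> quot_proj Y z" if "y \<in> Y" for y
    unfolding quot_proj_def using subspace_add[OF Y zw that] subspace_diff[OF Y that zw] by blast+
  then show "quot_proj Y z = quot_proj Y w"
    unfolding quot_proj_def by (auto simp: algebra_simps)
qed

lemma quot_proj_descend:
  assumes Y: "subspace Y" and h: "\<And>x y. y \<in> Y \<Longrightarrow> h (x + y) = h x"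
  shows "\<exists>g. \<forall>z. g (quot_proj Y z) = h z"
proof (intro exI allI)
  fix z
  define r where "r = (SOME r. quot_proj Y z = quot_proj Y r)"
  have "quot_proj Y z = quot_proj Y r"
    unfolding r_def by (rule someI[of _ z]) (rule refl)
  then have "r - z \<in> Y"
    using quot_proj_eq_iff[OF Y] by blast
  then show "(\<lambda>S. h (SOME r. S = quot_proj Y r)) (quot_proj Y z) = h z"
    using h[of "r - z" z] by (simp add: r_def[symmetric])
qed

lemma bounded_linear_quot_norm_bound:
  fixes g :: "'a::real_normed_vector \<Rightarrow> real"
  assumes g: "bounded_linear g" and zero: "\<And>y. y \<in> Y \<Longrightarrow> g y = 0" and Y: "Y \<noteq> {}"
  shows "\<exists>K. \<forall>z. \<bar>g z\<bar> \<le> K * quot_norm Y z"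
proof -
  obtain K where K: "0 < K" "\<And>x. norm (g x) \<le> norm x * K"
    using bounded_linear.pos_bounded[OF g] by blast
  have "\<bar>g z\<bar> / K \<le> quot_norm Y z" for z
    unfolding quot_norm_def infdist_notempty[OF Y]
  proof (rule cINF_greatest[OF Y])
    fix y
    assume "y \<in> Y"
    then have "g z = g (z - y)"
      using zero linear_diff[OF bounded_linear.linear[OF g]] by simp
    then show "\<bar>g z\<bar> / K \<le> dist z y"
      using K by (simp add: dist_norm divide_le_eq)
  qed
  then show ?thesis
    using K(1) by (metis mult.commute pos_divide_le_eq)
qed

lemma decomposes_mem_imp_affine_line:
  assumes dec: "decomposes f Y" and v: "v \<in> Y"
  shows "\<exists>a. \<forall>z t. f (z + t *\<^sub>R v) = f z + t * a"
proof -
  obtain l c where Y: "subspace Y" and l: "bounded_linear l"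
    and f: "\<And>z. f z = c (quot_proj Y z) + l z"
    using dec unfolding decomposes_def by blast
  have "f (z + t *\<^sub>R v) = f z + t * l v" for z t
  proof -
    have "quot_proj Y (z + t *\<^sub>R v) = quot_proj Y z"
      using quot_proj_eq_iff[OF Y] subspace_scale[OF Y v] by simp
    then show ?thesis
      using f[of z] f[of "z + t *\<^sub>R v"] linear_add[OF bounded_linear.linear[OF l]]
        linear_scale[OF bounded_linear.linear[OF l]]
      by simp
  qed
  then show ?thesis
    by blast
qed

lemma decomposes_affine_line_imp_mem:
  assumes dec: "decomposes f Y" and line: "\<And>t. f (z + t *\<^sub>R v) = f z + t * a"
  shows "v \<in> Y"
proof (rule ccontr)
  assume v: "v \<notin> Y"
  obtain l c L where Y: "subspace Y" and l: "linear l" and f: "\<And>z. f z = c (quot_proj Y z) + l z"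
    and L: "linear (\<lambda>z. L (quot_proj Y z))"
    and coercive: "quot_dir_coercive Y (\<lambda>x. c x - L x)"
    using dec unfolding decomposes_def quot_ess_dir_coercive_def quot_dual_def
    by (blast dest: bounded_linear.linear)
  define K where "K = f z - l z - L (quot_proj Y z)"
  define B where "B = a - l v - L (quot_proj Y v)"
  have along: "c (quot_proj Y (z + t *\<^sub>R v)) - L (quot_proj Y (z + t *\<^sub>R v)) = K + t * B" for t
    using f[of "z + t *\<^sub>R v"] line[of t] linear_add[OF l] linear_scale[OF l]
      linear_add[OF L] linear_scale[OF L]
    by (simp add: K_def B_def algebra_simps)
  have "quot_proj Y w \<noteq> quot_proj Y 0" if "w = v \<or> w = -v" for w
    using that v quot_proj_eq_iff[OF Y, of w 0] subspace_neg[OF Y, of "-v"] by auto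
  then have lim: "filterlim (\<lambda>t. c (quot_proj Y (z + t *\<^sub>R w)) - L (quot_proj Y (z + t *\<^sub>R w)))
      at_top at_top" if "w = v \<or> w = -v" for w
    using coercive that unfolding quot_dir_coercive_def by blast
  have along_neg: "c (quot_proj Y (z - t *\<^sub>R v)) - L (quot_proj Y (z - t *\<^sub>R v)) = K - t * B" for t
    using along[of "-t"] by simp
  have "filterlim (\<lambda>t::real. K + t * B) at_top at_top"
    using lim[of v] by (simp add: along)
  moreover have "filterlim (\<lambda>t::real. K - t * B) at_top at_top"
    using lim[of "-v"] by (simp add: along_neg)
  ultimately have "filterlim (\<lambda>t::real. (K + t * B) + (K - t * B)) at_top at_top"
    by (rule filterlim_at_top_add_at_top)
  then have "eventually (\<lambda>t::real. 2 * K + 1 \<le> (K + t * B) + (K - t * B)) at_top"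
    unfolding filterlim_at_top by blast
  then show False
    by simp
qed

lemma decomposes_eq_affine_directions:
  assumes dec: "decomposes f Y" and \<xi>: "\<xi> \<in> subdiff f z0"
  shows "Y = {v. \<forall>t::real. f (z0 + t *\<^sub>R v) - f z0 - \<xi> (t *\<^sub>R v) = 0}"
proof -
  have \<xi>_scale: "\<xi> (t *\<^sub>R v) = t * \<xi> v" for t v
    using linear_scale[OF subdiff_linear[OF \<xi>]] by simp
  show ?thesis
  proof (intro equalityI subsetI CollectI allI)
    fix v t
    assume "v \<in> Y"
    then obtain a where line: "\<And>z t. f (z + t *\<^sub>R v) = f z + t * a"
      using decomposes_mem_imp_affine_line[OF dec] by blast
    then have "\<xi> v = a"
      by (rule subdiff_affine_line_slope[OF \<xi>])
    then show "f (z0 + t *\<^sub>R v) - f z0 - \<xi> (t *\<^sub>R v) = 0"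
      using line \<xi>_scale by simp
  next
    fix v
    assume "v \<in> {v. \<forall>t::real. f (z0 + t *\<^sub>R v) - f z0 - \<xi> (t *\<^sub>R v) = 0}"
    then have "f (z0 + t *\<^sub>R v) = f z0 + t * \<xi> v" for t
      using \<xi>_scale by (simp add: algebra_simps)
    then show "v \<in> Y"
      by (rule decomposes_affine_line_imp_mem[OF dec])
  qed
qed

section \<open>Averaging subgradients\<close>

lemma dominated_linear_series:
  fixes g :: "nat \<Rightarrow> 'a::real_normed_vector \<Rightarrow> real"
  assumes lin: "\<And>n. linear (g n)" and bound: "\<And>n x. \<bar>g n x\<bar> \<le> c n * norm x"
    and c: "summable c"
  shows summable_linear_series: "summable (\<lambda>n. g n x)"
    and bounded_linear_suminf: "bounded_linear (\<lambda>x. \<Sum>n. g n x)"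
proof -
  have abs_summable: "summable (\<lambda>n. \<bar>g n x\<bar>)" for x
    using bound by (intro summable_comparison_test'[OF summable_mult2[OF c]]) auto
  then show summable: "summable (\<lambda>n. g n x)" for x
    by (rule summable_rabs_cancel)
  show "bounded_linear (\<lambda>x. \<Sum>n. g n x)"
  proof (rule bounded_linear_intro)
    show "(\<Sum>n. g n (x + y)) = (\<Sum>n. g n x) + (\<Sum>n. g n y)" for x y
      using suminf_add[OF summable summable] linear_add[OF lin] by simp
    show "(\<Sum>n. g n (r *\<^sub>R x)) = r *\<^sub>R (\<Sum>n. g n x)" for r x
      using suminf_mult[OF summable, of r] linear_scale[OF lin] by simp
    show "norm (\<Sum>n. g n x) \<le> norm x * suminf c" for x
    proof -
      have "\<bar>\<Sum>n. g n x\<bar> \<le> (\<Sum>n. \<bar>g n x\<bar>)"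
        by (rule summable_rabs[OF abs_summable])
      also have "\<dots> \<le> (\<Sum>n. c n * norm x)"
        by (rule suminf_le[OF bound abs_summable summable_mult2[OF c]])
      also have "\<dots> = norm x * suminf c"
        using suminf_mult2[OF c, of "norm x"] by (simp add: mult.commute)
      finally show ?thesis
        by simp
    qed
  qed
qed

lemma exists_positive_weights_bounded_average:
  fixes \<eta> :: "nat \<Rightarrow> 'a::real_normed_vector \<Rightarrow> real"
  assumes \<eta>: "\<And>n. bounded_linear (\<eta> n)"
  obtains b where "\<And>n. 0 < b n" "b sums 1" "\<And>x. summable (\<lambda>n. b n * \<eta> n x)"
    "bounded_linear (\<lambda>x. \<Sum>n. b n * \<eta> n x)"
proof -
  have "\<forall>n. \<exists>K. 0 < K \<and> (\<forall>x. norm (\<eta> n x) \<le> norm x * K)"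
    using bounded_linear.pos_bounded[OF \<eta>] by blast
  from choice[OF this] obtain K where K: "\<And>n. 0 < K n" "\<And>n x. norm (\<eta> n x) \<le> norm x * K n"
    by blast
  define a where "a n = (1/2::real) ^ n / (1 + K n)" for n
  have a_pos: "0 < a n" for n
    using K(1)[of n] by (simp add: a_def)
  have "a n \<le> (1/2) ^ n" for n
    using K(1)[of n] by (simp add: a_def divide_le_eq)
  then have a_summable: "summable a"
    using a_pos by (intro summable_comparison_test'[OF summable_geometric[of "1/2::real"]])
      (auto simp: abs_of_pos)
  define A where "A = suminf a"
  have A: "0 < A"
    unfolding A_def by (rule suminf_pos[OF a_summable a_pos])
  define b where "b n = a n / A" for n
  have b_pos: "0 < b n" for n
    using a_pos A by (simp add: b_def)
  have b_sums: "b sums 1"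
    using sums_divide[OF summable_sums[OF a_summable], of A] A by (simp add: b_def[abs_def] A_def)
  have bound: "\<bar>b n * \<eta> n x\<bar> \<le> ((1/2) ^ n / A) * norm x" for n x
  proof -
    have "\<bar>b n * \<eta> n x\<bar> \<le> b n * (K n * norm x)"
      using K(2)[of n x] b_pos[of n] by (simp add: abs_mult mult.commute mult_left_mono)
    also have "\<dots> = ((1/2) ^ n / A) * norm x * (K n / (1 + K n))"
      using K(1)[of n] by (simp add: b_def a_def field_simps)
    also have "\<dots> \<le> ((1/2) ^ n / A) * norm x"
      using K(1)[of n] A by (intro mult_left_le) auto
    finally show ?thesis .
  qed
  have geometric: "summable (\<lambda>n. (1/2::real) ^ n / A)"
    by (intro summable_divide summable_geometric) simp
  have lin: "linear (\<lambda>x. b n * \<eta> n x)" for n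
    using \<eta> by (intro bounded_linear.linear bounded_linear_const_mult)
  show ?thesis
    by (rule that[OF b_pos b_sums dominated_linear_series[OF lin bound geometric]])
qed

lemma convex_combination_eq_upper_bound:
  fixes b a :: "nat \<Rightarrow> real"
  assumes b: "\<And>n. 0 < b n" "b sums 1" and ba: "(\<lambda>n. b n * a n) sums s"
    and le: "\<And>n. a n \<le> s"
  shows "a n = s"
proof -
  have "(\<lambda>n. b n * s - b n * a n) sums (1 * s - s)"
    by (intro sums_diff sums_mult2 b ba)
  then have "(\<lambda>n. b n * (s - a n)) sums 0"
    by (simp add: algebra_simps)
  moreover have "0 \<le> b n * (s - a n)" for n
    using b(1)[of n] le[of n] by simp
  ultimately have "b n * (s - a n) = 0"
    using suminf_eq_zero_iff[of "\<lambda>n. b n * (s - a n)"] by (simp add: sums_iff)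
  then show ?thesis
    using b(1)[of n] by simp
qed

lemma convex_on_diff_linear:
  assumes "convex_on UNIV f" and L: "linear L"
  shows "convex_on UNIV (\<lambda>x. f x - L x)"
proof (rule convex_on_diff[OF assms(1)])
  show "concave_on UNIV L"
    unfolding concave_on_iff by (simp add: linear_add[OF L] linear_scale[OF L])
qed

lemma convex_real_not_tendsto_imp_antimono:
  fixes \<phi> :: "real \<Rightarrow> real"
  assumes \<phi>: "convex_on UNIV \<phi>" and not_tendsto: "\<not> filterlim \<phi> at_top at_top" and t12: "t1 \<le> t2"
  shows "\<phi> t2 \<le> \<phi> t1"
proof (rule ccontr)
  assume "\<not> \<phi> t2 \<le> \<phi> t1"
  with t12 have t12: "t1 < t2" and "\<phi> t1 < \<phi> t2"
    by (auto simp: order.order_iff_strict)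
  define k where "k = (\<phi> t1 - \<phi> t2) / (t1 - t2)"
  have k: "0 < k"
    unfolding k_def using t12 \<open>\<phi> t1 < \<phi> t2\<close> by (intro divide_neg_neg) auto
  have lower: "\<phi> t2 + k * (t - t2) \<le> \<phi> t" if "t2 < t" for t
  proof -
    have "k \<le> (\<phi> t2 - \<phi> t) / (t2 - t)"
      unfolding k_def using convex_on_slope_le[OF \<phi> UNIV_I UNIV_I t12 that] by linarith
    then show ?thesis
      using that by (simp add: field_simps)
  qed
  have "filterlim \<phi> at_top at_top"
    unfolding filterlim_at_top
  proof (intro allI)
    fix Z
    show "eventually (\<lambda>t. Z \<le> \<phi> t) at_top"
      using eventually_gt_at_top[of "max t2 (t2 + (Z - \<phi> t2) / k)"]
    proof eventually_elim
      case (elim t)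
      then have "t2 < t" "Z - \<phi> t2 < k * (t - t2)"
        using k by (auto simp: field_simps)
      with lower[of t] show ?case
        by simp
    qed
  qed
  with not_tendsto show False ..
qed

lemma not_coercive_on_line_imp_upper_affine:
  assumes f: "convex_on UNIV f" and L: "linear L"
    and not_coercive: "\<not> filterlim (\<lambda>t. f (z + t *\<^sub>R w) - L (z + t *\<^sub>R w)) at_top at_top"
    and t: "0 \<le> t"
  shows "f (z + t *\<^sub>R w) \<le> f z + t * L w"
proof -
  have "convex_on UNIV (\<lambda>t. f (z + t *\<^sub>R w) - L (z + t *\<^sub>R w))"
    by (rule convex_on_compose_affine[OF convex_on_diff_linear[OF f L]]) (simp add: linear_scaleR_left)
  from convex_real_not_tendsto_imp_antimono[OF this not_coercive t] show ?thesis
    using linear_add[OF L] linear_scale[OF L] by simp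
qed

section \<open>The subspace of affine directions\<close>

definition affine_directions :: "('a::real_vector \<Rightarrow> real) \<Rightarrow> ('a \<Rightarrow> real) \<Rightarrow> 'a set" where
  "affine_directions f \<xi> = {v. \<forall>x t. f (x + t *\<^sub>R v) = f x + t * \<xi> v}"

lemma subspace_affine_directions:
  assumes \<xi>: "linear \<xi>"
  shows "subspace (affine_directions f \<xi>)"
proof (rule subspaceI)
  show "0 \<in> affine_directions f \<xi>"
    using linear_0[OF \<xi>] by (simp add: affine_directions_def)
next
  fix u v
  assume "u \<in> affine_directions f \<xi>" "v \<in> affine_directions f \<xi>"
  then have "f ((x + t *\<^sub>R u) + t *\<^sub>R v) = f x + t * \<xi> u + t * \<xi> v" for x t
    by (simp add: affine_directions_def)
  then show "u + v \<in> affine_directions f \<xi>"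
    using linear_add[OF \<xi>] by (simp add: affine_directions_def algebra_simps)
next
  fix c v
  assume "v \<in> affine_directions f \<xi>"
  then have "f (x + (t * c) *\<^sub>R v) = f x + (t * c) * \<xi> v" for x t
    by (simp add: affine_directions_def)
  then show "c *\<^sub>R v \<in> affine_directions f \<xi>"
    using linear_scale[OF \<xi>] by (simp add: affine_directions_def)
qed

lemma closed_affine_directions:
  assumes f: "continuous_on UNIV f" and \<xi>: "bounded_linear \<xi>"
  shows "closed (affine_directions f \<xi>)"
  unfolding affine_directions_def
  by (intro closed_Collect_all closed_Collect_eq continuous_on_compose2[OF f]
      continuous_intros linear_continuous_on[OF \<xi>]) auto

lemma averaged_subgradient_coercive:
  fixes f :: "'a::real_normed_vector \<Rightarrow> real"
  assumes cont: "continuous_on UNIV f" and conv: "convex_on UNIV f"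
    and dense: "closure (range d) = UNIV" and \<eta>: "\<And>n. \<eta> n \<in> subdiff f (d n)"
    and b: "\<And>n. 0 < b n" "b sums 1"
    and L: "linear L" "\<And>x. (\<lambda>n. b n * \<eta> n x) sums L x"
    and \<xi>: "\<xi> \<in> subdiff f x0" and w: "w \<notin> affine_directions f \<xi>"
  shows "filterlim (\<lambda>t. f (z + t *\<^sub>R w) - L (z + t *\<^sub>R w)) at_top at_top"
proof (rule ccontr)
  assume "\<not> ?thesis"
  then have "f (z + t *\<^sub>R w) \<le> f z + t * L w" if "0 \<le> t" for t
    by (rule not_coercive_on_line_imp_upper_affine[OF conv L(1) _ that])
  then have "\<eta> n w \<le> L w" for n
    by (rule subdiff_le_upper_slope[OF \<eta>])
  then have "\<eta> n w = L w" for n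
    by (rule convex_combination_eq_upper_bound[OF b L(2)])
  then have line: "f (x + t *\<^sub>R w) = f x + t * L w" for x t
    using \<eta> by (intro affine_line_of_dense_subgradients[OF cont dense]) blast
  then have "\<xi> w = L w"
    by (rule subdiff_affine_line_slope[OF \<xi>])
  with line w show False
    by (simp add: affine_directions_def)
qed

lemma exists_averaged_subgradient:
  fixes f :: "'a::real_normed_vector \<Rightarrow> real"
  assumes separable: "\<exists>D::'a set. countable D \<and> closure D = UNIV"
    and cont: "continuous_on UNIV f" and conv: "convex_on UNIV f"
  obtains d \<eta> b L0 where "closure (range d) = UNIV" "\<And>n. \<eta> n \<in> subdiff f (d n)"
    "\<And>n. 0 < b n" "b sums 1" "bounded_linear L0" "\<And>x. (\<lambda>n. b n * \<eta> n x) sums L0 x"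
proof -
  obtain D :: "'a set" where D: "countable D" "closure D = UNIV"
    using separable by blast
  then have "D \<noteq> {}"
    by auto
  then have dense: "closure (range (from_nat_into D)) = UNIV"
    using D by (simp add: range_from_nat_into)
  have "\<forall>n. \<exists>\<eta>. \<eta> \<in> subdiff f (from_nat_into D n)"
    using subdiff_nonempty[OF cont conv] by blast
  from choice[OF this] obtain \<eta> where \<eta>: "\<And>n. \<eta> n \<in> subdiff f (from_nat_into D n)"
    by blast
  then have \<eta>_bounded: "\<And>n. bounded_linear (\<eta> n)"
    unfolding subdiff_def by blast
  obtain b where b: "\<And>n. 0 < b n" "b sums 1"
    and L0: "\<And>x. summable (\<lambda>n. b n * \<eta> n x)" "bounded_linear (\<lambda>x. \<Sum>n. b n * \<eta> n x)"
    using exists_positive_weights_bounded_average[of \<eta>, OF \<eta>_bounded] by blast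
  show ?thesis
    using that[OF dense \<eta> b L0(2)] L0(1) by (simp add: summable_sums)
qed

lemma decomposes_affine_directionsI:
  fixes f :: "'a::real_normed_vector \<Rightarrow> real"
  assumes cont: "continuous_on UNIV f" and conv: "convex_on UNIV f"
    and \<xi>: "bounded_linear \<xi>" and L0: "bounded_linear L0"
    and L0_eq: "\<And>y. y \<in> affine_directions f \<xi> \<Longrightarrow> L0 y = \<xi> y"
    and coercive: "\<And>z w. w \<notin> affine_directions f \<xi> \<Longrightarrow>
      filterlim (\<lambda>t. f (z + t *\<^sub>R w) - L0 (z + t *\<^sub>R w)) at_top at_top"
  shows "decomposes f (affine_directions f \<xi>)"
proof -
  define Y where "Y = affine_directions f \<xi>"
  have \<xi>_lin: "linear \<xi>" and L0_lin: "linear L0"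
    using \<xi> L0 by (auto dest: bounded_linear.linear)
  have Y: "subspace Y" "closed Y"
    unfolding Y_def using subspace_affine_directions closed_affine_directions cont \<xi> \<xi>_lin by auto
  have shift: "f (x + y) = f x + \<xi> y" if "y \<in> Y" for x y
  proof -
    have "f (x + 1 *\<^sub>R y) = f x + 1 * \<xi> y"
      using that unfolding Y_def affine_directions_def by blast
    then show ?thesis
      by simp
  qed
  have "\<exists>c. \<forall>z. c (quot_proj Y z) = f z - \<xi> z"
    by (rule quot_proj_descend[OF Y(1)]) (simp add: shift linear_add[OF \<xi>_lin])
  then obtain c where c: "\<And>z. c (quot_proj Y z) = f z - \<xi> z"
    by blast
  have "\<exists>L. \<forall>z. L (quot_proj Y z) = L0 z - \<xi> z"
    by (rule quot_proj_descend[OF Y(1)]) (simp add: L0_eq Y_def linear_add[OF \<xi>_lin] linear_add[OF L0_lin])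
  then obtain L where L: "\<And>z. L (quot_proj Y z) = L0 z - \<xi> z"
    by blast
  have "quot_convex Y c"
    unfolding quot_convex_def c
  proof (intro allI ballI)
    fix z w and u :: real
    assume "u \<in> {0..1}"
    then show "f (u *\<^sub>R z + (1 - u) *\<^sub>R w) - \<xi> (u *\<^sub>R z + (1 - u) *\<^sub>R w)
        \<le> u * (f z - \<xi> z) + (1 - u) * (f w - \<xi> w)"
      using convex_onD[OF convex_on_diff_linear[OF conv \<xi>_lin], of "1 - u" z w] by simp
  qed
  moreover have "quot_dual Y L"
  proof -
    have g: "bounded_linear (\<lambda>z. L0 z - \<xi> z)"
      by (rule bounded_linear_sub[OF L0 \<xi>])
    moreover have "Y \<noteq> {}"
      using subspace_0[OF Y(1)] by blast
    ultimately have "\<exists>K. \<forall>z. \<bar>L0 z - \<xi> z\<bar> \<le> K * quot_norm Y z"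
      using L0_eq by (intro bounded_linear_quot_norm_bound) (auto simp: Y_def)
    with g show ?thesis
      unfolding quot_dual_def L by (auto dest: bounded_linear.linear)
  qed
  moreover have "quot_dir_coercive Y (\<lambda>S. c S - L S)"
    unfolding quot_dir_coercive_def
  proof (intro allI impI)
    fix z w
    assume "quot_proj Y w \<noteq> quot_proj Y 0"
    then have "w \<notin> affine_directions f \<xi>"
      using quot_proj_eq_iff[OF Y(1)] by (simp add: Y_def)
    then show "filterlim (\<lambda>t. c (quot_proj Y (z + t *\<^sub>R w)) - L (quot_proj Y (z + t *\<^sub>R w))) at_top at_top"
      using coercive by (simp add: c L)
  qed
  moreover have "\<forall>z. f z = c (quot_proj Y z) + \<xi> z"
    by (simp add: c)
  ultimately have "decomposes f Y"
    unfolding decomposes_def quot_ess_dir_coercive_def using Y \<xi> by blast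
  then show ?thesis
    by (simp add: Y_def)
qed

lemma decomposes_affine_directions:
  fixes f :: "'a::real_normed_vector \<Rightarrow> real"
  assumes separable: "\<exists>D::'a set. countable D \<and> closure D = UNIV"
    and cont: "continuous_on UNIV f" and conv: "convex_on UNIV f"
    and \<xi>: "\<xi> \<in> subdiff f x0"
  shows "decomposes f (affine_directions f \<xi>)"
proof -
  obtain d \<eta> b L0 where dense: "closure (range d) = UNIV" and \<eta>: "\<And>n. \<eta> n \<in> subdiff f (d n)"
    and b: "\<And>n. 0 < b n" "b sums 1"
    and L0: "bounded_linear L0" "\<And>x. (\<lambda>n. b n * \<eta> n x) sums L0 x"
    using exists_averaged_subgradient[OF separable cont conv] by blast
  have "L0 y = \<xi> y" if "y \<in> affine_directions f \<xi>" for y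
  proof -
    have "\<eta> n y = \<xi> y" for n
      by (rule subdiff_affine_line_slope[OF \<eta>]) (use that in \<open>simp add: affine_directions_def\<close>)
    then have "(\<lambda>n. b n * \<eta> n y) sums \<xi> y"
      using sums_mult2[OF b(2), of "\<xi> y"] by simp
    then show ?thesis
      by (rule sums_unique2[OF L0(2)])
  qed
  moreover have "filterlim (\<lambda>t. f (z + t *\<^sub>R w) - L0 (z + t *\<^sub>R w)) at_top at_top"
    if "w \<notin> affine_directions f \<xi>" for z w
    using averaged_subgradient_coercive[OF cont conv dense \<eta> b bounded_linear.linear[OF L0(1)] L0(2) \<xi> that] .
  moreover have "bounded_linear \<xi>"
    using \<xi> by (simp add: subdiff_def)
  ultimately show ?thesis
    using decomposes_affine_directionsI[OF cont conv _ L0(1)] by blast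
qed

theorem mainTheorem3:
  fixes f :: "'a::banach \<Rightarrow> real"
  assumes separable: "\<exists>D::'a set. countable D \<and> closure D = UNIV"
    and cont: "continuous_on UNIV f"
    and conv: "convex_on UNIV f"
  shows "(\<exists>!Y. decomposes f Y) \<and>
    (\<forall>Y. decomposes f Y \<longrightarrow> (\<forall>z0. \<forall>\<xi>0\<in>subdiff f z0.
        Y = {v. \<forall>t::real. f (z0 + t *\<^sub>R v) - f z0 - \<xi>0 (t *\<^sub>R v) = 0}))"
proof -
  obtain \<xi> where \<xi>: "\<xi> \<in> subdiff f 0"
    using subdiff_nonempty[OF cont conv] by blast
  have "decomposes f (affine_directions f \<xi>)"
    by (rule decomposes_affine_directions[OF separable cont conv \<xi>])
  moreover have "Y = Y'" if "decomposes f Y" "decomposes f Y'" for Y Y'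
    using decomposes_eq_affine_directions[OF that(1) \<xi>] decomposes_eq_affine_directions[OF that(2) \<xi>]
    by simp
  ultimately show ?thesis
    using decomposes_eq_affine_directions by blast
qed

end
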